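(* Let $B\colon\mathbf{Set}\to\mathbf{Set}$ be a functor, $\Lambda$ a finite set, and $(\tau_\lambda\colon B[0,1]\to[0,1])_{\lambda\in\Lambda}$ functions such that, for every set $Y$, whenever a sequence of functions $k_i\colon Y\to[0,1]$ converges uniformly to $l$, the sequence $\tau_\lambda\circ Bk_i$ converges uniformly to $\tau_\lambda\circ Bl$ for each $\lambda$. Let $X$ be a set and $S\subseteq\mathbf{Set}(X,[0,1])$ such that (i) $S$ contains the constant function $1$ and is closed under $k\mapsto1-k$, pointwise $\min(k,l)$, and $k\mapsto\max(k-q,0)$ for every $q\in\mathbb{Q}\cap[0,1]$; (ii) the pseudometric space $(X,d_S)$ with $d_S(x,y)=\sup_{k\in S}|k(x)-k(y)|$ is totally bounded. Then $S$ is approximating: for every nonexpansive map $h\colon(X,d_S)\to([0,1],d_e)$, every $\lambda\in\Lambda$ and all $z,w\in BX$, $\sup_{k\in S,\lambda'\in\Lambda}|\tau_{\lambda'}(Bk(z))-\tau_{\lambda'}(Bk(w))|\ge|\tau_\lambda(Bh(z))-\tau_\lambda(Bh(w))|$.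
   Context: $d_e$ is the Euclidean metric on $[0,1]$. A pseudometric space $(X,d)$ is totally bounded if for every $\varepsilon>0$ there is a finite $F\subseteq X$ such that every $x\in X$ has some $y\in F$ with $d(x,y)<\varepsilon$. *)

theory Defs
  imports "HOL-Analysis.Analysis"
begin

definition dS :: "('x \<Rightarrow> real) set \<Rightarrow> 'x \<Rightarrow> 'x \<Rightarrow> real" where
  "dS S x y = (SUP k\<in>S. \<bar>k x - k y\<bar>)"

definition totally_bounded_pm :: "'x set \<Rightarrow> ('x \<Rightarrow> 'x \<Rightarrow> real) \<Rightarrow> bool" where
  "totally_bounded_pm X d \<longleftrightarrow>
     (\<forall>e>0. \<exists>F. finite F \<and> F \<subseteq> X \<and> (\<forall>x\<in>X. \<exists>y\<in>F. d x y < e))"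

definition nonexpansive_pm :: "'x set \<Rightarrow> ('x \<Rightarrow> 'x \<Rightarrow> real) \<Rightarrow> ('x \<Rightarrow> real) \<Rightarrow> bool" where
  "nonexpansive_pm X d h \<longleftrightarrow> (\<forall>x\<in>X. \<forall>y\<in>X. \<bar>h x - h y\<bar> \<le> d x y)"

end

theory Submission
  imports Defs
begin

text \<open>
  This is a lattice version of the Stone--Weierstrass theorem. Truncations by rationals
  and complements let S match a nonexpansive h up to any error at any two given points;
  a finite net, which total boundedness supplies in place of compactness, turns finitely
  many such two-point approximants into a uniform approximant of h by a Max of Mins.
  Hence h is a uniform limit of members of S, the continuity hypothesis on the \<tau>s carries
  this over to B X, and the inequality follows in the limit.
\<close>

lemma Rats_dense_in_interval:
  fixes e t a b :: real
  assumes "e > 0" "a \<le> t" "t \<le> b" "a \<in> \<rat>" "b \<in> \<rat>"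
  obtains r where "r \<in> \<rat>" "a \<le> r" "r \<le> b" "\<bar>r - t\<bar> < e"
proof -
  obtain r0 where r0: "r0 \<in> \<rat>" "t - e < r0" "r0 < t + e"
    using Rats_dense_in_real[of "t - e" "t + e"] assms by auto
  have "max a (min b r0) \<in> \<rat>"
    using r0 assms by (auto simp: max_def min_def)
  moreover have "a \<le> max a (min b r0)" "max a (min b r0) \<le> b" "\<bar>max a (min b r0) - t\<bar> < e"
    using r0 assms by (auto simp: max_def min_def)
  ultimately show thesis by (rule that)
qed

lemma uniform_limit_of_approximants:
  fixes h :: "'a \<Rightarrow> real"
  assumes "\<And>e. e > 0 \<Longrightarrow> \<exists>g\<in>S. \<forall>x\<in>X. \<bar>g x - h x\<bar> \<le> e"
  obtains g where "\<And>n. g n \<in> S" "uniform_limit X g h sequentially"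
proof -
  have "\<forall>n. \<exists>g\<in>S. \<forall>x\<in>X. \<bar>g x - h x\<bar> \<le> inverse (real (Suc n))"
    using assms by simp
  then obtain g where g: "\<And>n. g n \<in> S" "\<And>n x. x \<in> X \<Longrightarrow> \<bar>g n x - h x\<bar> \<le> inverse (real (Suc n))"
    by metis
  have "uniform_limit X g h sequentially"
    unfolding uniform_limit_sequentially_iff
  proof (intro allI impI)
    fix e :: real
    assume "e > 0"
    then obtain N where N: "inverse (real (Suc N)) < e"
      using reals_Archimedean by blast
    have "dist (g n x) (h x) < e" if "n \<ge> N" "x \<in> X" for n x
    proof -
      have "inverse (real (Suc n)) \<le> inverse (real (Suc N))"
        using \<open>n \<ge> N\<close> by (simp add: le_imp_inverse_le)
      then show ?thesis
        using g(2)[OF \<open>x \<in> X\<close>, of n] N unfolding dist_real_def by linarith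
    qed
    then show "\<exists>N. \<forall>n\<ge>N. \<forall>x\<in>X. dist (g n x) (h x) < e"
      by blast
  qed
  with g(1) show thesis by (rule that)
qed

lemma limit_le_cSUP:
  fixes f :: "'a \<Rightarrow> real"
  assumes "bdd_above (f ` A)" "\<And>n. a n \<in> A" "(\<lambda>n. f (a n)) \<longlonglongrightarrow> L"
  shows "L \<le> (SUP x\<in>A. f x)"
proof (rule LIMSEQ_le_const2[OF assms(3)])
  show "\<exists>N. \<forall>n\<ge>N. f (a n) \<le> (SUP x\<in>A. f x)"
    using cSUP_upper[OF assms(2,1)] by blast
qed

lemma bdd_above_abs_diff_unit:
  fixes f g :: "'a \<Rightarrow> real"
  assumes "\<And>p. p \<in> A \<Longrightarrow> f p \<in> {0..1}" "\<And>p. p \<in> A \<Longrightarrow> g p \<in> {0..1}"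
  shows "bdd_above ((\<lambda>p. \<bar>f p - g p\<bar>) ` A)"
proof (rule bdd_aboveI2)
  fix p
  assume "p \<in> A"
  with assms show "\<bar>f p - g p\<bar> \<le> 1"
    by fastforce
qed

lemma nonexpansive_pmD: "nonexpansive_pm X d h \<Longrightarrow> x \<in> X \<Longrightarrow> y \<in> X \<Longrightarrow> \<bar>h x - h y\<bar> \<le> d x y"
  unfolding nonexpansive_pm_def by blast

lemma dS_commute: "dS S x y = dS S y x"
  unfolding dS_def by (simp add: abs_minus_commute)

locale unit_lattice =
  fixes X :: "'x set" and S :: "('x \<Rightarrow> real) set"
  assumes S_sub: "S \<subseteq> X \<rightarrow>\<^sub>E {0..1}"
    and S_one: "restrict (\<lambda>x. 1) X \<in> S"
    and S_compl: "\<And>k. k \<in> S \<Longrightarrow> restrict (\<lambda>x. 1 - k x) X \<in> S"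
    and S_min: "\<And>k l. k \<in> S \<Longrightarrow> l \<in> S \<Longrightarrow> restrict (\<lambda>x. min (k x) (l x)) X \<in> S"
    and S_trunc: "\<And>k q. k \<in> S \<Longrightarrow> q \<in> \<rat> \<Longrightarrow> 0 \<le> q \<Longrightarrow> q \<le> 1 \<Longrightarrow>
        restrict (\<lambda>x. max (k x - q) 0) X \<in> S"
begin

lemma mem_unit_interval: "k \<in> S \<Longrightarrow> x \<in> X \<Longrightarrow> 0 \<le> k x \<and> k x \<le> 1"
  using S_sub by (force simp: PiE_iff)

lemma restrict_mem_cong:
  assumes "k \<in> S" "\<And>x. x \<in> X \<Longrightarrow> k x = l x"
  shows "restrict l X \<in> S"
proof -
  have "k = restrict l X"
    using assms S_sub by (auto simp: PiE_iff extensional_def fun_eq_iff)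
  with assms(1) show ?thesis by simp
qed

lemma const_mem:
  assumes "q \<in> \<rat>" "0 \<le> q" "q \<le> 1"
  shows "restrict (\<lambda>x. q) X \<in> S"
  by (rule restrict_mem_cong[OF S_trunc[OF S_one, of "1 - q"]]) (use assms in auto)

lemma max_mem:
  assumes "k \<in> S" "l \<in> S"
  shows "restrict (\<lambda>x. max (k x) (l x)) X \<in> S"
  by (rule restrict_mem_cong[OF S_compl[OF S_min[OF S_compl[OF assms(1)] S_compl[OF assms(2)]]]])
    (auto simp: min_def max_def)

lemma clamp_shift_mem:
  assumes "k \<in> S" "r \<in> \<rat>" "\<bar>r\<bar> \<le> 1"
  shows "restrict (\<lambda>x. max 0 (min 1 (k x + r))) X \<in> S"
proof (cases "r \<ge> 0")
  case True
  show ?thesis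
    by (rule restrict_mem_cong[OF S_compl[OF S_trunc[OF S_compl[OF assms(1)], of r]]])
      (use assms True in \<open>auto simp: min_def max_def dest!: mem_unit_interval[OF assms(1)]\<close>)
next
  case False
  show ?thesis
    by (rule restrict_mem_cong[OF S_trunc[OF assms(1), of "- r"]])
      (use assms False in \<open>auto simp: min_def max_def dest!: mem_unit_interval[OF assms(1)]\<close>)
qed

lemma Min_mem:
  assumes "finite F" "F \<noteq> {}" "\<And>y. y \<in> F \<Longrightarrow> g y \<in> S"
  shows "restrict (\<lambda>x. Min ((\<lambda>y. g y x) ` F)) X \<in> S"
  using assms
proof (induction F rule: finite_ne_induct)
  case (singleton y)
  then show ?case by (intro restrict_mem_cong[of "g y"]) auto
next
  case (insert a F)
  show ?case
    by (rule restrict_mem_cong[OF S_min[OF _ insert.IH]]) (use insert in auto)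
qed

lemma Max_mem:
  assumes "finite F" "F \<noteq> {}" "\<And>y. y \<in> F \<Longrightarrow> g y \<in> S"
  shows "restrict (\<lambda>x. Max ((\<lambda>y. g y x) ` F)) X \<in> S"
  using assms
proof (induction F rule: finite_ne_induct)
  case (singleton y)
  then show ?case by (intro restrict_mem_cong[of "g y"]) auto
next
  case (insert a F)
  show ?case
    by (rule restrict_mem_cong[OF max_mem[OF _ insert.IH]]) (use insert in auto)
qed

lemma bdd_above_dist: "x \<in> X \<Longrightarrow> y \<in> X \<Longrightarrow> bdd_above ((\<lambda>k. \<bar>k x - k y\<bar>) ` S)"
  by (rule bdd_above_abs_diff_unit) (auto dest: mem_unit_interval)

lemma abs_le_dS: "k \<in> S \<Longrightarrow> x \<in> X \<Longrightarrow> y \<in> X \<Longrightarrow> \<bar>k x - k y\<bar> \<le> dS S x y"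
  unfolding dS_def by (rule cSUP_upper[OF _ bdd_above_dist])

lemma exists_close_to_dS:
  assumes "x \<in> X" "y \<in> X" "e > 0"
  obtains k where "k \<in> S" "dS S x y - e < \<bar>k x - k y\<bar>"
proof -
  have "S \<noteq> {}"
    using S_one by blast
  moreover have "dS S x y - e < (SUP k\<in>S. \<bar>k x - k y\<bar>)"
    using assms unfolding dS_def by simp
  ultimately have "\<exists>k\<in>S. dS S x y - e < \<bar>k x - k y\<bar>"
    by (simp add: less_cSUP_iff[OF _ bdd_above_dist[OF assms(1,2)]])
  with that show thesis
    by blast
qed

lemma two_point_approx_ordered:
  assumes ne: "nonexpansive_pm X (dS S) h" and hX: "h \<in> X \<rightarrow>\<^sub>E {0..1}"
    and xy: "x \<in> X" "y \<in> X" and h_le: "h y \<le> h x" and e: "e > 0"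
  obtains g where "g \<in> S" "\<bar>g x - h x\<bar> \<le> 2 * e" "\<bar>g y - h y\<bar> \<le> 2 * e"
proof -
  have h01: "0 \<le> h x" "h x \<le> 1" "0 \<le> h y" "h y \<le> 1"
    using hX xy by (auto simp: PiE_iff)
  have d: "h x - h y \<le> dS S x y"
    using nonexpansive_pmD[OF ne xy] by linarith
  obtain k0 where k0: "k0 \<in> S" "dS S x y - e < \<bar>k0 x - k0 y\<bar>"
    using exists_close_to_dS[OF xy e] .
  obtain k where k: "k \<in> S" "h x - h y - e < k x - k y"
  proof (cases "k0 y \<le> k0 x")
    case True
    show ?thesis
      by (rule that[of k0]) (use True k0 d in auto)
  next
    case False
    show ?thesis
      by (rule that[OF S_compl[OF k0(1)]]) (use False k0(2) d xy in auto)
  qed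
  have k01: "0 \<le> k x" "k x \<le> 1" "0 \<le> k y" "k y \<le> 1"
    using mem_unit_interval k(1) xy by auto
  obtain r where r: "r \<in> \<rat>" "-1 \<le> r" "r \<le> 1" "\<bar>r - (h y - k y)\<bar> < e"
    by (rule Rats_dense_in_interval[OF e, of "-1" "h y - k y" 1]) (use h01 k01 in auto)
  obtain c where c: "c \<in> \<rat>" "0 \<le> c" "c \<le> 1" "\<bar>c - h x\<bar> < e"
    by (rule Rats_dense_in_interval[OF e, of 0 "h x" 1]) (use h01 in auto)
  text \<open>Shifting by r puts k at height h y at y; as k rises by almost h x - h y from y to x,
    capping at c then gives height h x at x.\<close>
  define g where "g = restrict (\<lambda>t. min c (max 0 (min 1 (k t + r)))) X"
  have "g \<in> S"
    unfolding g_def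
    by (rule restrict_mem_cong[OF S_min[OF const_mem[OF c(1-3)] clamp_shift_mem[OF k(1) r(1)]]])
      (use r in auto)
  moreover have "\<bar>g x - h x\<bar> \<le> 2 * e"
  proof -
    have "\<bar>min c (max 0 (min 1 (k x + r))) - h x\<bar> \<le> 2 * e"
      using c r k(2) k01 h01 h_le unfolding min_def max_def abs_if by (smt (verit))
    with xy show ?thesis by (simp only: g_def restrict_apply')
  qed
  moreover have "\<bar>g y - h y\<bar> \<le> 2 * e"
  proof -
    have "\<bar>min c (max 0 (min 1 (k y + r))) - h y\<bar> \<le> 2 * e"
      using c r k(2) k01 h01 h_le unfolding min_def max_def abs_if by (smt (verit))
    with xy show ?thesis by (simp only: g_def restrict_apply')
  qed
  ultimately show thesis by (rule that)
qed

lemma two_point_approx: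
  assumes "nonexpansive_pm X (dS S) h" "h \<in> X \<rightarrow>\<^sub>E {0..1}" "x \<in> X" "y \<in> X" "e > 0"
  obtains g where "g \<in> S" "\<bar>g x - h x\<bar> \<le> e" "\<bar>g y - h y\<bar> \<le> e"
proof -
  have "e / 2 > 0"
    using assms(5) by simp
  consider "h y \<le> h x" | "h x \<le> h y"
    by linarith
  then obtain g where "g \<in> S" "\<bar>g x - h x\<bar> \<le> 2 * (e / 2)" "\<bar>g y - h y\<bar> \<le> 2 * (e / 2)"
  proof cases
    case 1
    from two_point_approx_ordered[OF assms(1-4) 1 \<open>e / 2 > 0\<close>] that show thesis .
  next
    case 2
    from two_point_approx_ordered[OF assms(1,2,4,3) 2 \<open>e / 2 > 0\<close>] that show thesis by blast
  qed
  then show thesis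
    by (intro that) auto
qed

lemma tight_upper_approx_at:
  assumes ne: "nonexpansive_pm X (dS S) h" and hX: "h \<in> X \<rightarrow>\<^sub>E {0..1}"
    and F: "finite F" "F \<noteq> {}" "F \<subseteq> X" and net: "\<And>z. z \<in> X \<Longrightarrow> \<exists>y\<in>F. dS S z y < \<eta>"
    and \<eta>: "\<eta> > 0" and x: "x \<in> X"
  obtains M where "M \<in> S" "h x - \<eta> \<le> M x" "\<And>z. z \<in> X \<Longrightarrow> M z \<le> h z + 3 * \<eta>"
proof -
  have "\<forall>y\<in>F. \<exists>g. g \<in> S \<and> \<bar>g x - h x\<bar> \<le> \<eta> \<and> \<bar>g y - h y\<bar> \<le> \<eta>"
  proof
    fix y
    assume "y \<in> F"
    with F(3) have "y \<in> X" by blast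
    obtain g where "g \<in> S" "\<bar>g x - h x\<bar> \<le> \<eta>" "\<bar>g y - h y\<bar> \<le> \<eta>"
      using two_point_approx[OF ne hX x \<open>y \<in> X\<close> \<eta>] .
    then show "\<exists>g. g \<in> S \<and> \<bar>g x - h x\<bar> \<le> \<eta> \<and> \<bar>g y - h y\<bar> \<le> \<eta>"
      by blast
  qed
  from bchoice[OF this] obtain G where G: "\<And>y. y \<in> F \<Longrightarrow> G y \<in> S"
    "\<And>y. y \<in> F \<Longrightarrow> \<bar>G y x - h x\<bar> \<le> \<eta>" "\<And>y. y \<in> F \<Longrightarrow> \<bar>G y y - h y\<bar> \<le> \<eta>"
    by blast
  define M where "M = restrict (\<lambda>z. Min ((\<lambda>y. G y z) ` F)) X"
  have "M \<in> S"
    unfolding M_def using F(1,2) G(1) by (rule Min_mem)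
  moreover have "h x - \<eta> \<le> M x"
    unfolding M_def using x F(1,2) G(2) by (force simp: abs_le_iff)
  moreover have "M z \<le> h z + 3 * \<eta>" if z: "z \<in> X" for z
  proof -
    obtain y where y: "y \<in> F" "dS S z y < \<eta>"
      using net[OF z] by blast
    have yX: "y \<in> X"
      using y(1) F(3) by blast
    have "M z \<le> G y z"
      unfolding M_def using z y(1) F(1) by simp
    also have "\<dots> \<le> G y y + dS S z y"
      using abs_le_dS[OF G(1)[OF y(1)] z yX] by linarith
    also have "\<dots> \<le> h y + \<eta> + dS S z y"
      using G(3)[OF y(1)] by linarith
    also have "\<dots> \<le> h z + \<eta> + 2 * dS S z y"
      using nonexpansive_pmD[OF ne z yX] dS_commute[of S y z] by linarith
    finally show ?thesis
      using y(2) by linarith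
  qed
  ultimately show thesis by (rule that)
qed

lemma uniform_approx_nonexpansive:
  assumes ne: "nonexpansive_pm X (dS S) h" and hX: "h \<in> X \<rightarrow>\<^sub>E {0..1}"
    and tb: "totally_bounded_pm X (dS S)" and e: "e > 0"
  shows "\<exists>g\<in>S. \<forall>z\<in>X. \<bar>g z - h z\<bar> \<le> e"
proof (cases "X = {}")
  case True
  then show ?thesis using S_one by auto
next
  case False
  define \<eta> where "\<eta> = e / 3"
  have \<eta>: "\<eta> > 0"
    using e unfolding \<eta>_def by simp
  obtain F where F: "finite F" "F \<subseteq> X" and net: "\<And>z. z \<in> X \<Longrightarrow> \<exists>y\<in>F. dS S z y < \<eta>"
    using tb \<eta> unfolding totally_bounded_pm_def by meson
  have F_ne: "F \<noteq> {}"
    using False net by blast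
  have "\<forall>x\<in>F. \<exists>m. m \<in> S \<and> h x - \<eta> \<le> m x \<and> (\<forall>z\<in>X. m z \<le> h z + 3 * \<eta>)"
  proof
    fix x
    assume "x \<in> F"
    with F(2) have "x \<in> X" by blast
    obtain m where "m \<in> S" "h x - \<eta> \<le> m x" "\<And>z. z \<in> X \<Longrightarrow> m z \<le> h z + 3 * \<eta>"
      using tight_upper_approx_at[OF ne hX F(1) F_ne F(2) net \<eta> \<open>x \<in> X\<close>] by blast
    then show "\<exists>m. m \<in> S \<and> h x - \<eta> \<le> m x \<and> (\<forall>z\<in>X. m z \<le> h z + 3 * \<eta>)"
      by blast
  qed
  from bchoice[OF this] obtain M where M: "\<And>x. x \<in> F \<Longrightarrow> M x \<in> S"
    "\<And>x. x \<in> F \<Longrightarrow> h x - \<eta> \<le> M x x"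
    "\<And>x z. x \<in> F \<Longrightarrow> z \<in> X \<Longrightarrow> M x z \<le> h z + 3 * \<eta>"
    by blast
  define H where "H = restrict (\<lambda>z. Max ((\<lambda>x. M x z) ` F)) X"
  have "H \<in> S"
    unfolding H_def using F(1) F_ne M(1) by (rule Max_mem)
  moreover have "\<bar>H z - h z\<bar> \<le> e" if z: "z \<in> X" for z
  proof -
    have upper: "H z \<le> h z + 3 * \<eta>"
      unfolding H_def using z F(1) F_ne M(3) by simp
    obtain x where x: "x \<in> F" "dS S z x < \<eta>"
      using net[OF z] by blast
    then have xX: "x \<in> X"
      using F(2) by blast
    have "h z - 3 * \<eta> \<le> h x - \<eta> - dS S z x"
      using nonexpansive_pmD[OF ne xX z] dS_commute[of S x z] x(2) by linarith
    also have "\<dots> \<le> M x x - dS S z x"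
      using M(2)[OF x(1)] by linarith
    also have "\<dots> \<le> M x z"
      using abs_le_dS[OF M(1)[OF x(1)] z xX] by linarith
    also have "\<dots> \<le> H z"
      unfolding H_def using z x(1) F(1) by simp
    finally show ?thesis
      using upper unfolding \<eta>_def by linarith
  qed
  ultimately show ?thesis by blast
qed

end

theorem propositionV6:
  fixes Bob :: "'x set \<Rightarrow> 'bx set"
    and BI :: "'bi set"
    and Bmap :: "'x set \<Rightarrow> ('x \<Rightarrow> real) \<Rightarrow> 'bx \<Rightarrow> 'bi"
    and \<Lambda> :: "'l set"
    and \<tau> :: "'l \<Rightarrow> 'bi \<Rightarrow> real"
    and X :: "'x set"
    and S :: "('x \<Rightarrow> real) set"
  assumes Bmap_type: "\<And>Y k. k \<in> Y \<rightarrow>\<^sub>E {0..1} \<Longrightarrow> Bmap Y k \<in> Bob Y \<rightarrow> BI"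
    and fin: "finite \<Lambda>"
    and tau_type: "\<And>l. l \<in> \<Lambda> \<Longrightarrow> \<tau> l \<in> BI \<rightarrow> {0..1}"
    and tau_cont: "\<And>Y k l lam. (\<And>i. k i \<in> Y \<rightarrow>\<^sub>E {0..1}) \<Longrightarrow> l \<in> Y \<rightarrow>\<^sub>E {0..1} \<Longrightarrow>
        uniform_limit Y k l sequentially \<Longrightarrow> lam \<in> \<Lambda> \<Longrightarrow>
        uniform_limit (Bob Y) (\<lambda>i z. \<tau> lam (Bmap Y (k i) z)) (\<lambda>z. \<tau> lam (Bmap Y l z)) sequentially"
    and S_sub: "S \<subseteq> X \<rightarrow>\<^sub>E {0..1}"
    and S_one: "restrict (\<lambda>x. 1) X \<in> S"
    and S_compl: "\<And>k. k \<in> S \<Longrightarrow> restrict (\<lambda>x. 1 - k x) X \<in> S"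
    and S_min: "\<And>k l. k \<in> S \<Longrightarrow> l \<in> S \<Longrightarrow> restrict (\<lambda>x. min (k x) (l x)) X \<in> S"
    and S_trunc: "\<And>k q. k \<in> S \<Longrightarrow> q \<in> \<rat> \<Longrightarrow> 0 \<le> q \<Longrightarrow> q \<le> 1 \<Longrightarrow>
        restrict (\<lambda>x. max (k x - q) 0) X \<in> S"
    and tb: "totally_bounded_pm X (dS S)"
  shows "\<forall>h \<in> X \<rightarrow>\<^sub>E {0..1}. nonexpansive_pm X (dS S) h \<longrightarrow>
          (\<forall>lam\<in>\<Lambda>. \<forall>z\<in>Bob X. \<forall>w\<in>Bob X.
             (SUP p\<in>S \<times> \<Lambda>. \<bar>\<tau> (snd p) (Bmap X (fst p) z) - \<tau> (snd p) (Bmap X (fst p) w)\<bar>)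
               \<ge> \<bar>\<tau> lam (Bmap X h z) - \<tau> lam (Bmap X h w)\<bar>)"
proof (intro ballI impI)
  fix h lam z w
  assume hX: "h \<in> X \<rightarrow>\<^sub>E {0..1}" and ne: "nonexpansive_pm X (dS S) h"
    and lam: "lam \<in> \<Lambda>" and z: "z \<in> Bob X" and w: "w \<in> Bob X"
  interpret unit_lattice X S
    by unfold_locales (fact S_sub S_one S_compl S_min S_trunc)+
  obtain g where g: "\<And>n. g n \<in> S" and lim: "uniform_limit X g h sequentially"
    using uniform_limit_of_approximants[OF uniform_approx_nonexpansive[OF ne hX tb]] by blast
  have unit: "\<tau> (snd p) (Bmap X (fst p) v) \<in> {0..1}" if "p \<in> S \<times> \<Lambda>" "v \<in> Bob X" for p v
    by (intro funcset_mem[OF tau_type] funcset_mem[OF Bmap_type])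
      (use S_sub that in \<open>auto simp: mem_Times_iff\<close>)
  have "uniform_limit (Bob X) (\<lambda>i v. \<tau> lam (Bmap X (g i) v)) (\<lambda>v. \<tau> lam (Bmap X h v)) sequentially"
    using g S_sub by (intro tau_cont[OF _ hX lim lam]) blast
  then have "(\<lambda>i. \<bar>\<tau> lam (Bmap X (g i) z) - \<tau> lam (Bmap X (g i) w)\<bar>)
      \<longlonglongrightarrow> \<bar>\<tau> lam (Bmap X h z) - \<tau> lam (Bmap X h w)\<bar>"
    by (intro tendsto_intros tendsto_uniform_limitI[OF _ z] tendsto_uniform_limitI[OF _ w])
  moreover have "bdd_above ((\<lambda>p. \<bar>\<tau> (snd p) (Bmap X (fst p) z) - \<tau> (snd p) (Bmap X (fst p) w)\<bar>) ` (S \<times> \<Lambda>))"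
    by (rule bdd_above_abs_diff_unit[OF unit[OF _ z] unit[OF _ w]])
  ultimately show "(SUP p\<in>S \<times> \<Lambda>. \<bar>\<tau> (snd p) (Bmap X (fst p) z) - \<tau> (snd p) (Bmap X (fst p) w)\<bar>)
      \<ge> \<bar>\<tau> lam (Bmap X h z) - \<tau> lam (Bmap X h w)\<bar>"
    using g lam by (intro limit_le_cSUP[where a = "\<lambda>i. (g i, lam)"]) auto
qed

end
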